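(* Let $G=(V,E)$ be a unit-weight graph and let $\theta\in[0,1]^V$ be an arbitrary stable solution. Then there exists a distribution $\mathcal{D}$ supported on independent sets of $G$ such that $\Pr_{S\sim\mathcal{D}}[v\in S]=\theta_v$ for every $v\in V$.
   Context: A unit-weight graph corresponds to a symmetric matrix $W\in\{0,1\}^{V\times V}$ with $W_{v,v}=1$, where $\{u,v\}\in E$ iff $u\ne v$ and $W_{u,v}=1$. A vector $\theta\in\mathbb{R}_{\ge0}^V$ is feasible if $W\theta\ge\mathbf 1$ coordinatewise, and is a stable solution if it is feasible and for every $v\in V$, $\theta_v=\min\{x\ge0:x+\sum_{u:\{u,v\}\in E}\theta_u\ge1\}$. *)

theory Defs
  imports "HOL-Probability.Probability"
begin

definition unit_weight_graph :: "'a set \<Rightarrow> ('a \<Rightarrow> 'a \<Rightarrow> real) \<Rightarrow> bool" where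
  "unit_weight_graph V W \<longleftrightarrow> finite V \<and>
     (\<forall>u\<in>V. \<forall>v\<in>V. W u v \<in> {0, 1} \<and> W u v = W v u) \<and> (\<forall>v\<in>V. W v v = 1)"

definition adj :: "'a set \<Rightarrow> ('a \<Rightarrow> 'a \<Rightarrow> real) \<Rightarrow> 'a \<Rightarrow> 'a \<Rightarrow> bool" where
  "adj V W u v \<longleftrightarrow> u \<in> V \<and> v \<in> V \<and> u \<noteq> v \<and> W u v = 1"

definition feasible :: "'a set \<Rightarrow> ('a \<Rightarrow> 'a \<Rightarrow> real) \<Rightarrow> ('a \<Rightarrow> real) \<Rightarrow> bool" where
  "feasible V W \<theta> \<longleftrightarrow> (\<forall>v\<in>V. 0 \<le> \<theta> v) \<and> (\<forall>v\<in>V. (\<Sum>u\<in>V. W v u * \<theta> u) \<ge> 1)"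

definition stable_solution :: "'a set \<Rightarrow> ('a \<Rightarrow> 'a \<Rightarrow> real) \<Rightarrow> ('a \<Rightarrow> real) \<Rightarrow> bool" where
  "stable_solution V W \<theta> \<longleftrightarrow> feasible V W \<theta> \<and>
     (\<forall>v\<in>V. \<theta> v = Inf {x::real. 0 \<le> x \<and> x + (\<Sum>u\<in>{u\<in>V. adj V W u v}. \<theta> u) \<ge> 1})"

definition independent_set :: "'a set \<Rightarrow> ('a \<Rightarrow> 'a \<Rightarrow> real) \<Rightarrow> 'a set \<Rightarrow> bool" where
  "independent_set V W S \<longleftrightarrow> S \<subseteq> V \<and> (\<forall>u\<in>S. \<forall>v\<in>S. \<not> adj V W u v)"

end

theory Submission
  imports Defs
begin

text \<open>Stability forces \<open>\<theta> v = max 0 (1 - \<theta>(N(v)))\<close>, so every vertex with \<open>\<theta> v > 0\<close>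
  satisfies \<open>\<theta> v + \<theta>(N(v)) \<le> 1\<close>. The distribution is built by adding the vertices one at a
  time: if \<open>D\<close> has the right marginals on the vertices processed so far, the union bound shows
  that with probability at least \<open>1 - \<theta>(N(x)) \<ge> \<theta> x\<close> no processed neighbour of the next
  vertex \<open>x\<close> is present; on that event \<open>x\<close> is added independently with the conditional
  probability that makes its marginal \<open>\<theta> x\<close>, leaving all other marginals unchanged.\<close>

lemma Inf_threshold_set:
  fixes s :: real
  shows "Inf {x. 0 \<le> x \<and> 1 \<le> x + s} = max 0 (1 - s)"
proof -
  have "{x. 0 \<le> x \<and> 1 \<le> x + s} = {max 0 (1 - s)..}" by auto
  then show ?thesis by simp
qed

lemma stable_solution_local_bound:
  assumes "stable_solution V W \<theta>" "v \<in> V"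
  shows "\<theta> v = 0 \<or> \<theta> v + (\<Sum>u\<in>{u\<in>V. adj V W u v}. \<theta> u) \<le> 1"
proof -
  have "\<theta> v = Inf {x. 0 \<le> x \<and> 1 \<le> x + (\<Sum>u\<in>{u\<in>V. adj V W u v}. \<theta> u)}"
    using assms unfolding stable_solution_def by blast
  then have "\<theta> v = max 0 (1 - (\<Sum>u\<in>{u\<in>V. adj V W u v}. \<theta> u))"
    by (simp only: Inf_threshold_set)
  then show ?thesis by linarith
qed

lemma prob_avoid_ge_one_minus_sum:
  fixes D :: "'a set pmf"
  assumes "finite N"
  shows "1 - (\<Sum>u\<in>N. measure_pmf.prob D {S. u \<in> S}) \<le> measure_pmf.prob D {S. N \<inter> S = {}}"
proof -
  have "measure_pmf.prob D (- {S. N \<inter> S = {}}) = measure_pmf.prob D (\<Union>u\<in>N. {S. u \<in> S})"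
    by (rule arg_cong[where f="measure_pmf.prob D"]) auto
  also have "\<dots> \<le> (\<Sum>u\<in>N. measure_pmf.prob D {S. u \<in> S})"
    by (rule measure_pmf.finite_measure_subadditive_finite) (use assms in auto)
  finally show ?thesis
    using measure_pmf.prob_compl[of "{S. N \<inter> S = {}}" D] by (simp add: Compl_eq_Diff_UNIV)
qed

lemma pmf_insert_on_event:
  fixes D :: "'a set pmf"
  assumes t: "0 \<le> t" "t \<le> measure_pmf.prob D A"
    and x_absent: "\<forall>S\<in>set_pmf D. x \<notin> S"
  shows "\<exists>D'. (\<forall>T\<in>set_pmf D'. \<exists>S\<in>set_pmf D. T = S \<or> (S \<in> A \<and> T = insert x S)) \<and>
    measure_pmf.prob D' {T. x \<in> T} = t \<and>
    (\<forall>v. v \<noteq> x \<longrightarrow> measure_pmf.prob D' {T. v \<in> T} = measure_pmf.prob D {S. v \<in> S})"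
proof -
  define p where "p = measure_pmf.prob D A"
  define q where "q = t / p"
  define P where "P = pair_pmf D (bernoulli_pmf q)"
  define g where "g = (\<lambda>(S, b). if b \<and> S \<in> A then insert x S else S)"
  have q: "0 \<le> q" "q \<le> 1" "p * q = t"
    using t unfolding q_def p_def by (auto simp: divide_le_eq_1)
  have "measure_pmf.prob (map_pmf g P) {T. x \<in> T} = measure_pmf.prob P ((A \<inter> set_pmf D) \<times> {True})"
  proof -
    have "g -` {T. x \<in> T} \<inter> set_pmf P = ((A \<inter> set_pmf D) \<times> {True}) \<inter> set_pmf P"
      using x_absent unfolding P_def g_def by (auto split: if_splits)
    then show ?thesis by (metis measure_Int_set_pmf measure_map_pmf)
  qed
  also have "\<dots> = measure_pmf.prob D (A \<inter> set_pmf D) * measure_pmf.prob (bernoulli_pmf q) {True}"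
    unfolding P_def by (rule measure_pmf_prob_product) (auto intro: countable_subset)
  also have "\<dots> = t"
    using q unfolding p_def by (simp add: measure_Int_set_pmf measure_pmf_single)
  finally have marginal_x: "measure_pmf.prob (map_pmf g P) {T. x \<in> T} = t" .
  have marginal_other: "measure_pmf.prob (map_pmf g P) {T. v \<in> T} = measure_pmf.prob D {S. v \<in> S}"
    if "v \<noteq> x" for v
  proof -
    have "g -` {T. v \<in> T} = fst -` {S. v \<in> S}"
      using that unfolding g_def by (auto split: if_splits)
    then have "measure_pmf.prob (map_pmf g P) {T. v \<in> T}
        = measure_pmf.prob (map_pmf fst P) {S. v \<in> S}" by simp
    then show ?thesis unfolding P_def map_fst_pair_pmf .
  qed
  have support: "\<exists>S\<in>set_pmf D. T = S \<or> (S \<in> A \<and> T = insert x S)" if T: "T \<in> set_pmf (map_pmf g P)" for T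
  proof -
    obtain S b where "S \<in> set_pmf D" "T = g (S, b)"
      using T unfolding P_def by auto
    then show ?thesis unfolding g_def by auto
  qed
  show ?thesis
    by (intro exI[of _ "map_pmf g P"] conjI allI impI ballI support marginal_x marginal_other)
qed

lemma exists_independent_pmf_with_marginals:
  fixes F :: "'a set" and R :: "'a \<Rightarrow> 'a \<Rightarrow> bool" and \<theta> :: "'a \<Rightarrow> real"
  assumes "finite F"
    and "\<forall>v\<in>F. 0 \<le> \<theta> v"
    and "\<forall>v\<in>F. \<theta> v = 0 \<or> \<theta> v + (\<Sum>u\<in>{u\<in>F. R u v}. \<theta> u) \<le> 1"
    and R_sym: "\<And>u v. R u v \<longleftrightarrow> R v u" and R_irrefl: "\<And>u. \<not> R u u"
  shows "\<exists>D :: 'a set pmf. (\<forall>S\<in>set_pmf D. S \<subseteq> F \<and> (\<forall>u\<in>S. \<forall>v\<in>S. \<not> R u v)) \<and>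
      (\<forall>v\<in>F. measure_pmf.prob D {S. v \<in> S} = \<theta> v)"
  using assms(1-3)
proof (induction F rule: finite_induct)
  case empty
  show ?case by (intro exI[of _ "return_pmf {}"]) auto
next
  case (insert x F)
  have "\<forall>v\<in>F. \<theta> v = 0 \<or> \<theta> v + (\<Sum>u\<in>{u\<in>F. R u v}. \<theta> u) \<le> 1"
  proof
    fix v assume "v \<in> F"
    moreover have "(\<Sum>u\<in>{u\<in>F. R u v}. \<theta> u) \<le> (\<Sum>u\<in>{u\<in>insert x F. R u v}. \<theta> u)"
      using insert.hyps insert.prems(1) by (intro sum_mono2) auto
    ultimately show "\<theta> v = 0 \<or> \<theta> v + (\<Sum>u\<in>{u\<in>F. R u v}. \<theta> u) \<le> 1"
      using insert.prems(2) by force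
  qed
  then obtain D where D_indep: "\<forall>S\<in>set_pmf D. S \<subseteq> F \<and> (\<forall>u\<in>S. \<forall>v\<in>S. \<not> R u v)"
    and D_marginals: "\<forall>v\<in>F. measure_pmf.prob D {S. v \<in> S} = \<theta> v"
    using insert.IH insert.prems(1) by auto
  define N where "N = {u\<in>F. R u x}"
  define A where "A = {S. N \<inter> S = {}}"
  have avoid: "1 - (\<Sum>u\<in>N. \<theta> u) \<le> measure_pmf.prob D A"
    using prob_avoid_ge_one_minus_sum[of N D] insert.hyps(1) D_marginals
    unfolding A_def N_def by simp
  have "{u\<in>insert x F. R u x} = N"
    using R_irrefl unfolding N_def by auto
  moreover have "\<theta> x = 0 \<or> \<theta> x + (\<Sum>u\<in>{u\<in>insert x F. R u x}. \<theta> u) \<le> 1"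
    using insert.prems(2) by blast
  ultimately have "\<theta> x = 0 \<or> \<theta> x + (\<Sum>u\<in>N. \<theta> u) \<le> 1" by simp
  then have "\<theta> x \<le> measure_pmf.prob D A"
    using avoid measure_nonneg[of "measure_pmf D" A] by linarith
  moreover have "0 \<le> \<theta> x" using insert.prems(1) by blast
  moreover have "\<forall>S\<in>set_pmf D. x \<notin> S" using D_indep insert.hyps(2) by blast
  ultimately obtain D' where
      D'_support: "\<forall>T\<in>set_pmf D'. \<exists>S\<in>set_pmf D. T = S \<or> (S \<in> A \<and> T = insert x S)"
    and D'_x: "measure_pmf.prob D' {T. x \<in> T} = \<theta> x"
    and D'_other: "\<forall>v. v \<noteq> x \<longrightarrow> measure_pmf.prob D' {T. v \<in> T} = measure_pmf.prob D {S. v \<in> S}"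
    using pmf_insert_on_event[of "\<theta> x" D A x] by blast
  have "T \<subseteq> insert x F \<and> (\<forall>u\<in>T. \<forall>v\<in>T. \<not> R u v)" if T: "T \<in> set_pmf D'" for T
  proof -
    obtain S where S: "S \<in> set_pmf D" "T = S \<or> (S \<in> A \<and> T = insert x S)"
      using D'_support T by blast
    then have "T = S \<or> (T = insert x S \<and> (\<forall>u\<in>S. \<not> R u x))"
      using D_indep unfolding A_def N_def by blast
    then show ?thesis using S(1) D_indep R_sym R_irrefl by blast
  qed
  moreover have "\<forall>v\<in>insert x F. measure_pmf.prob D' {T. v \<in> T} = \<theta> v"
    using D'_x D'_other D_marginals by auto
  ultimately show ?case by blast
qed

theorem lemma3p6:
  fixes V :: "'a set" and W :: "'a \<Rightarrow> 'a \<Rightarrow> real" and \<theta> :: "'a \<Rightarrow> real"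
  assumes "unit_weight_graph V W"
    and "\<forall>v\<in>V. \<theta> v \<in> {0..1}"
    and "stable_solution V W \<theta>"
  shows "\<exists>D :: 'a set pmf. (\<forall>S\<in>set_pmf D. independent_set V W S) \<and>
           (\<forall>v\<in>V. measure_pmf.prob D {S. v \<in> S} = \<theta> v)"
proof -
  have "finite V" using assms(1) unfolding unit_weight_graph_def by auto
  moreover have "\<forall>v\<in>V. 0 \<le> \<theta> v" using assms(2) by auto
  moreover have "\<forall>v\<in>V. \<theta> v = 0 \<or> \<theta> v + (\<Sum>u\<in>{u\<in>V. adj V W u v}. \<theta> u) \<le> 1"
    using stable_solution_local_bound[OF assms(3)] by blast
  moreover have "\<And>u v. adj V W u v \<longleftrightarrow> adj V W v u"
    using assms(1) unfolding unit_weight_graph_def adj_def by auto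
  moreover have "\<And>u. \<not> adj V W u u" unfolding adj_def by auto
  ultimately show ?thesis
    using exists_independent_pmf_with_marginals[of V \<theta> "adj V W"]
    unfolding independent_set_def by blast
qed

end
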